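(* Let $S$ be a primitive substitution over a finite alphabet $\mathcal{A}$ and let $\omega_0\in\mathcal{A}^{\mathbb{Z}}$. The following are equivalent: (i) $d_{\mathcal{H}}\big(\Omega_n(\omega_0),\Omega(S)\big)\to 0$ as $n\to\infty$; (ii) every directed path in $G(S)$ whose starting vertex is a $2$-word of $\omega_0$ (i.e. an element of $W(\omega_0)_2$) does not contain a closed directed subpath; (iii) every directed path in $G(S)$ whose starting vertex is an element of $W(\omega_0)_2$ has length strictly less than $|\mathcal{A}|^2$.
   Context: $\mathcal{A}$ is a finite alphabet, $\mathcal{A}^+=\bigcup_{n\ge1}\mathcal{A}^n$ is the set of finite words, $|u|$ the length of $u$, and $u\prec w$ means $u$ is a (contiguous) subword of $w$. A configuration is a map $\omega:\mathbb{Z}\to\mathcal{A}$; $\mathbb{Z}$ acts by $(m\cdot\omega)(n)=\omega(n-m)$. The metric on $\mathcal{A}^{\mathbb{Z}}$ is $d(\omega_1,\omega_2)=\inf\{\frac1{r+1}: r\ge0,\ \omega_1|_{(-r,r)}=\omega_2|_{(-r,r)}\}$. A subshift is a nonempty closed $\mathbb{Z}$-invariant subset of $\mathcal{A}^{\mathbb{Z}}$; $d_{\mathcal{H}}$ is the Hausdorff metric on subshifts induced by $d$. The dictionary of $\omega$ is $W(\omega)=\{\omega|_{[n_1,n_2)}: n_1<n_2\}$ (finite words read off $\omega$), $W(\Omega)=\bigcup_{\omega\in\Omega}W(\omega)$, and $W(\cdot)_\ell=W(\cdot)\cap\mathcal{A}^\ell$. A substitution is a map $S:\mathcal{A}\to\mathcal{A}^+$,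 extended to $\mathcal{A}^+$ by concatenation and to $\mathcal{A}^{\mathbb{Z}}$ by concatenation $\cdots S(\omega(-1))S(\omega(0))S(\omega(1))\cdots$ with $S(\omega(0))$ starting at position $0$. $S$ is primitive if there is $p\in\mathbb{N}$ with $b\prec S^p(a)$ for all $a,b\in\mathcal{A}$. The legal words are $W(S)=\{u\in\mathcal{A}^+: u\prec S^n(a)\text{ for some }a\in\mathcal{A},n\in\mathbb{N}\}$; words not in $W(S)$ are illegal. For primitive $S$, $\Omega(S)$ is the unique subshift with $W(\Omega(S))=W(S)$. The iterative hull sequence (IHS) is $\Omega_n(\omega_0)=\overline{\{m\cdot S^n(\omega_0):m\in\mathbb{Z}\}}$. The directed graph $G(S)$ has vertex set $\mathcal{A}^2$ and a directed edge $u\to w$ iff $u,w$ are both illegal and $w\prec S(u)$. A directed path of length $\ell\ge1$ is a tuple $(u_0,\dots,u_\ell)$ with $u_{j-1}\to u_j$ for all $j$; it is closed if $u_0=u_\ell$; a subpath is a contiguous sub-tuple which is itself a path. *)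

theory Defs
  imports Complex_Main
begin

text \<open>Configurations are maps int \<Rightarrow> 'a; finite words are nonempty lists.\<close>

type_synonym 'a config = "int \<Rightarrow> 'a"

definition shift :: "int \<Rightarrow> 'a config \<Rightarrow> 'a config" where
  "shift m \<omega> = (\<lambda>n. \<omega> (n - m))"

definition cdist :: "'a config \<Rightarrow> 'a config \<Rightarrow> real" where
  "cdist \<omega>1 \<omega>2 = Inf {1 / (real r + 1) | r :: nat.
      \<forall>n::int. - int r < n \<and> n < int r \<longrightarrow> \<omega>1 n = \<omega>2 n}"

definition cclosure :: "'a config set \<Rightarrow> 'a config set" where
  "cclosure X = {\<omega>. \<forall>\<epsilon>>0. \<exists>x\<in>X. cdist \<omega> x < \<epsilon>}"

definition subshift :: "'a config set \<Rightarrow> bool" where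
  "subshift \<Omega> \<longleftrightarrow> \<Omega> \<noteq> {} \<and> cclosure \<Omega> \<subseteq> \<Omega> \<and> (\<forall>m. \<forall>\<omega>\<in>\<Omega>. shift m \<omega> \<in> \<Omega>)"

definition hdist :: "'a config set \<Rightarrow> 'a config set \<Rightarrow> real" where
  "hdist A B = max (SUP x\<in>A. INF y\<in>B. cdist x y) (SUP y\<in>B. INF x\<in>A. cdist x y)"

definition subword :: "'a list \<Rightarrow> 'a list \<Rightarrow> bool" where
  "subword u w \<longleftrightarrow> u \<noteq> [] \<and> (\<exists>p s. w = p @ u @ s)"

definition dict :: "'a config \<Rightarrow> 'a list set" where
  "dict \<omega> = {map (\<lambda>i. \<omega> (n1 + int i)) [0..<nat (n2 - n1)] | n1 n2. n1 < n2}"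

definition dictset :: "'a config set \<Rightarrow> 'a list set" where
  "dictset \<Omega> = (\<Union>\<omega>\<in>\<Omega>. dict \<omega>)"

definition substw :: "('a \<Rightarrow> 'a list) \<Rightarrow> 'a list \<Rightarrow> 'a list" where
  "substw S w = concat (map S w)"

text \<open>Starting position of the block S(w(k)) in S(w), with S(w(0)) starting at 0.\<close>
definition blockpos :: "('a \<Rightarrow> 'a list) \<Rightarrow> 'a config \<Rightarrow> int \<Rightarrow> int" where
  "blockpos S \<omega> k = (if 0 \<le> k then (\<Sum>i\<in>{0..<k}. int (length (S (\<omega> i))))
                     else - (\<Sum>i\<in>{k..<0}. int (length (S (\<omega> i)))))"

definition substc :: "('a \<Rightarrow> 'a list) \<Rightarrow> 'a config \<Rightarrow> 'a config" where
  "substc S \<omega> = (THE \<omega>'. \<forall>k. \<forall>j < length (S (\<omega> k)).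
                     \<omega>' (blockpos S \<omega> k + int j) = S (\<omega> k) ! j)"

definition primitive :: "('a::finite \<Rightarrow> 'a list) \<Rightarrow> bool" where
  "primitive S \<longleftrightarrow> (\<exists>p>0. \<forall>a b. subword [b] ((substw S ^^ p) [a]))"

definition legal :: "('a \<Rightarrow> 'a list) \<Rightarrow> 'a list set" where
  "legal S = {u. u \<noteq> [] \<and> (\<exists>a n. subword u ((substw S ^^ n) [a]))}"

definition OmegaS :: "('a \<Rightarrow> 'a list) \<Rightarrow> 'a config set" where
  "OmegaS S = (THE \<Omega>. subshift \<Omega> \<and> dictset \<Omega> = legal S)"

definition IHS :: "('a \<Rightarrow> 'a list) \<Rightarrow> 'a config \<Rightarrow> nat \<Rightarrow> 'a config set" where
  "IHS S \<omega>0 n = cclosure {shift m ((substc S ^^ n) \<omega>0) | m. True}"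

definition Gedge :: "('a \<Rightarrow> 'a list) \<Rightarrow> 'a list \<Rightarrow> 'a list \<Rightarrow> bool" where
  "Gedge S u w \<longleftrightarrow> length u = 2 \<and> length w = 2 \<and> u \<notin> legal S \<and> w \<notin> legal S
                     \<and> subword w (substw S u)"

text \<open>A directed path (u_0,...,u_l), l \<ge> 1, given as the list of its vertices; its length is l.\<close>
definition Gpath :: "('a \<Rightarrow> 'a list) \<Rightarrow> 'a list list \<Rightarrow> bool" where
  "Gpath S us \<longleftrightarrow> 2 \<le> length us \<and> (\<forall>j. 0 < j \<and> j < length us \<longrightarrow> Gedge S (us ! (j - 1)) (us ! j))"

definition path_len :: "'a list list \<Rightarrow> nat" where
  "path_len us = length us - 1"

definition closed_path :: "'a list list \<Rightarrow> bool" where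
  "closed_path us \<longleftrightarrow> hd us = last us"

definition subpath :: "('a \<Rightarrow> 'a list) \<Rightarrow> 'a list list \<Rightarrow> 'a list list \<Rightarrow> bool" where
  "subpath S vs us \<longleftrightarrow> Gpath S vs \<and> (\<exists>i k. vs = take k (drop i us))"

end

theory Submission
  imports Defs
begin

text \<open>
Only the 2-words matter. An illegal 2-word of \<open>S\<^sup>n(\<omega>\<^sub>0)\<close> lies inside the image of a 2-word of
\<open>S\<^sup>n\<^sup>-\<^sup>1(\<omega>\<^sub>0)\<close>, which must itself be illegal: it is joined to it by an edge of \<open>G(S)\<close>.
Conversely every edge out of a 2-word of a configuration leads to a 2-word of its image.
Hence illegal 2-words survive in all \<open>S\<^sup>n(\<omega>\<^sub>0)\<close> exactly when \<open>G(S)\<close> has arbitrarily long paths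
starting in \<open>W(\<omega>\<^sub>0)\<^sub>2\<close>; since \<open>G(S)\<close> has \<open>|\<A>|\<^sup>2\<close> vertices, this happens iff some such path has
length at least \<open>|\<A>|\<^sup>2\<close>, iff some such path runs through a cycle, which can then be pumped.

If an illegal 2-word survives, every hull \<open>\<Omega>\<^sub>n(\<omega>\<^sub>0)\<close> contains a point at distance at least 1/3
from \<open>\<Omega>(S)\<close>. If all 2-words of \<open>S\<^sup>K(\<omega>\<^sub>0)\<close> are legal, then, because the words \<open>S\<^sup>m(a)\<close> become long,
every word of fixed length of \<open>S\<^sup>K\<^sup>+\<^sup>m(\<omega>\<^sub>0)\<close> lies in the image of a legal 2-word and is legal;
by primitivity every legal word eventually occurs in \<open>S\<^sup>n(\<omega>\<^sub>0)\<close>. So the words of each fixed length of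
\<open>S\<^sup>n(\<omega>\<^sub>0)\<close> are eventually exactly the legal ones, which is Hausdorff convergence to \<open>\<Omega>(S)\<close>.
\<close>

section \<open>Windows and dictionaries\<close>

definition win :: "'a config \<Rightarrow> int \<Rightarrow> nat \<Rightarrow> 'a list" where
  "win \<omega> n L = map (\<lambda>i. \<omega> (n + int i)) [0..<L]"

lemma length_win [simp]: "length (win \<omega> n L) = L"
  by (simp add: win_def)

lemma nth_win [simp]: "i < L \<Longrightarrow> win \<omega> n L ! i = \<omega> (n + int i)"
  by (simp add: win_def)

lemma win_Suc: "win \<omega> n (Suc L) = win \<omega> n L @ [\<omega> (n + int L)]"
  by (simp add: win_def)

lemma win_add: "win \<omega> n (a + b) = win \<omega> n a @ win \<omega> (n + int a) b"
  by (rule nth_equalityI) (auto simp: nth_append add.assoc)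

lemma win_shift: "win (shift m \<omega>) n L = win \<omega> (n - m) L"
  by (simp add: win_def shift_def algebra_simps)

lemma dict_eq_wins: "dict \<omega> = {win \<omega> n L | n L. 0 < L}"
proof (rule set_eqI, rule iffI)
  fix u assume "u \<in> dict \<omega>"
  then obtain n1 n2 where "u = map (\<lambda>i. \<omega> (n1 + int i)) [0..<nat (n2 - n1)]" and "n1 < n2"
    unfolding dict_def by blast
  then have "u = win \<omega> n1 (nat (n2 - n1))" "0 < nat (n2 - n1)" by (simp_all add: win_def)
  then show "u \<in> {win \<omega> n L | n L. 0 < L}" by blast
next
  fix u assume "u \<in> {win \<omega> n L | n L. 0 < L}"
  then obtain n L where u: "u = win \<omega> n L" and L: "0 < L" by blast
  have "u = map (\<lambda>i. \<omega> (n + int i)) [0..<nat ((n + int L) - n)]" using u by (simp add: win_def)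
  moreover have "n < n + int L" using L by simp
  ultimately show "u \<in> dict \<omega>" unfolding dict_def by blast
qed

lemma win_in_dict: "0 < L \<Longrightarrow> win \<omega> n L \<in> dict \<omega>"
  by (auto simp: dict_eq_wins)

lemma dictE:
  assumes "u \<in> dict \<omega>"
  obtains n where "u = win \<omega> n (length u)" and "0 < length u"
proof -
  from assms obtain n L where "u = win \<omega> n L" "0 < L" unfolding dict_eq_wins by blast
  then show thesis using that[of n] by simp
qed

lemma win_eq_appendD: "win \<omega> n L = p @ v @ s \<Longrightarrow> v = win \<omega> (n + int (length p)) (length v)"
proof -
  assume h: "win \<omega> n L = p @ v @ s"
  have L: "L = length p + length v + length s" using arg_cong[OF h, of length] by simp
  show ?thesis
  proof (rule nth_equalityI)
    fix i assume i: "i < length v"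
    have "v ! i = (p @ v @ s) ! (length p + i)" using i by (simp add: nth_append)
    also have "\<dots> = \<omega> (n + int (length p + i))" using h i L by (metis add_less_cancel_left
          length_append nth_win trans_less_add1 add.assoc)
    finally show "v ! i = win \<omega> (n + int (length p)) (length v) ! i" using i by (simp add: add.assoc)
  qed simp
qed

section \<open>Subwords and substitution on words\<close>

lemma subword_trans: "subword u v \<Longrightarrow> subword v w \<Longrightarrow> subword u w"
  unfolding subword_def by (metis append.assoc)

lemma subword_length_le: "subword u w \<Longrightarrow> length u \<le> length w"
  unfolding subword_def by auto

lemma dict_subword: "u \<in> dict \<omega> \<Longrightarrow> subword v u \<Longrightarrow> v \<in> dict \<omega>"
proof -
  assume u: "u \<in> dict \<omega>" and sv: "subword v u"
  obtain n where un: "u = win \<omega> n (length u)" using u by (rule dictE)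
  from sv obtain p s where "u = p @ v @ s" and "v \<noteq> []" unfolding subword_def by auto
  then have "v = win \<omega> (n + int (length p)) (length v)" using un win_eq_appendD by metis
  then show ?thesis using \<open>v \<noteq> []\<close> by (metis length_greater_0_conv win_in_dict)
qed

lemma subword_win_win:
  assumes "p \<le> n" "n + int L \<le> p + int M" "0 < L"
  shows "subword (win \<omega> n L) (win \<omega> p M)"
proof -
  define d where "d = nat (n - p)"
  have n: "n = p + int d" using assms d_def by simp
  have M: "M = d + (L + (M - d - L))" using assms n by linarith
  have "win \<omega> p M = win \<omega> p d @ win \<omega> n L @ win \<omega> (n + int L) (M - d - L)"
    by (subst M, simp only: win_add n add.assoc)
  moreover have "win \<omega> n L \<noteq> []" using assms by (metis length_greater_0_conv length_win)
  ultimately show ?thesis unfolding subword_def by blast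
qed

lemma substw_append [simp]: "substw S (u @ v) = substw S u @ substw S v"
  by (simp add: substw_def)

lemma substw_Nil [simp]: "substw S [] = []"
  by (simp add: substw_def)

lemma substw_Cons: "substw S (a # u) = S a @ substw S u"
  by (simp add: substw_def)

lemma substw_concat: "substw S (concat xs) = concat (map (substw S) xs)"
  by (induction xs) auto

lemma substw_neq_Nil: "\<forall>a. S a \<noteq> [] \<Longrightarrow> u \<noteq> [] \<Longrightarrow> substw S u \<noteq> []"
  by (cases u) (auto simp: substw_Cons)

lemma length_substw_ge: "\<forall>a. S a \<noteq> [] \<Longrightarrow> length u \<le> length (substw S u)"
proof (induction u)
  case (Cons a u)
  then have "1 \<le> length (S a)" by (metis One_nat_def Suc_leI length_greater_0_conv)
  then show ?case using Cons by (simp add: substw_Cons)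
qed simp

lemma length_funpow_substw_ge: "\<forall>a. S a \<noteq> [] \<Longrightarrow> length u \<le> length ((substw S ^^ n) u)"
  by (induction n) (auto intro: order_trans[OF _ length_substw_ge])

lemma funpow_substw_neq_Nil: "\<forall>a. S a \<noteq> [] \<Longrightarrow> (substw S ^^ m) [a] \<noteq> []"
  using length_funpow_substw_ge[of S "[a]" m] by auto

lemma subword_substw: "\<forall>a. S a \<noteq> [] \<Longrightarrow> subword u w \<Longrightarrow> subword (substw S u) (substw S w)"
proof -
  assume ne: "\<forall>a. S a \<noteq> []" and "subword u w"
  then obtain p s where "u \<noteq> []" "w = p @ u @ s" unfolding subword_def by blast
  then have "substw S w = substw S p @ substw S u @ substw S s" by simp
  then show ?thesis unfolding subword_def using substw_neq_Nil[OF ne \<open>u \<noteq> []\<close>] by blast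
qed

lemma subword_funpow_substw:
  "\<forall>a. S a \<noteq> [] \<Longrightarrow> subword u w \<Longrightarrow> subword ((substw S ^^ n) u) ((substw S ^^ n) w)"
  by (induction n) (auto simp: subword_substw)

lemma substw_funpow_letters: "substw (\<lambda>a. (substw S ^^ m) [a]) v = (substw S ^^ m) v"
proof (induction m arbitrary: v)
  case 0
  then show ?case by (induction v) (auto simp: substw_Cons)
next
  case (Suc m)
  have "substw (\<lambda>a. (substw S ^^ Suc m) [a]) v = concat (map (\<lambda>a. substw S ((substw S ^^ m) [a])) v)"
    by (simp add: substw_def)
  also have "\<dots> = substw S (concat (map (\<lambda>a. (substw S ^^ m) [a]) v))"
    by (simp add: substw_concat o_def)
  also have "concat (map (\<lambda>a. (substw S ^^ m) [a]) v) = substw (\<lambda>a. (substw S ^^ m) [a]) v"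
    by (simp add: substw_def)
  finally show ?case using Suc by simp
qed

lemma legal_subword: "u \<in> legal S \<Longrightarrow> subword v u \<Longrightarrow> v \<in> legal S"
  unfolding legal_def using subword_trans subword_def by blast

lemma legal_substw: "\<forall>a. S a \<noteq> [] \<Longrightarrow> u \<in> legal S \<Longrightarrow> substw S u \<in> legal S"
proof -
  assume ne: "\<forall>a. S a \<noteq> []" and u: "u \<in> legal S"
  then obtain a n where "u \<noteq> []" "subword u ((substw S ^^ n) [a])" unfolding legal_def by auto
  then have "subword (substw S u) ((substw S ^^ Suc n) [a])" using subword_substw[OF ne] by simp
  then show ?thesis unfolding legal_def using substw_neq_Nil[OF ne \<open>u \<noteq> []\<close>] by blast
qed

lemma legal_funpow_substw: "\<forall>a. S a \<noteq> [] \<Longrightarrow> u \<in> legal S \<Longrightarrow> (substw S ^^ m) u \<in> legal S"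
  by (induction m) (auto simp: legal_substw)

section \<open>Substitution on configurations\<close>

lemma blockpos_0 [simp]: "blockpos T \<omega> 0 = 0"
  by (simp add: blockpos_def)

lemma blockpos_succ: "blockpos T \<omega> (k + 1) = blockpos T \<omega> k + int (length (T (\<omega> k)))"
proof (cases "0 \<le> k")
  case True
  have "{0..<k+1} = insert k {0..<k}" using True by auto
  then show ?thesis using True by (simp add: blockpos_def)
next
  case False
  show ?thesis
  proof (cases "k = -1")
    case True
    have "{-1..<0::int} = {-1}" by auto
    then show ?thesis using True by (simp add: blockpos_def)
  next
    case False2: False
    have "{k..<0} = insert k {k+1..<0}" using False False2 by auto
    then show ?thesis using False False2 by (simp add: blockpos_def)
  qed
qed

lemma blockpos_unique:
  assumes "g 0 = 0" "\<And>k. g (k + 1) = g k + int (length (T (\<omega> k)))"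
  shows "g k = blockpos T \<omega> k"
proof (induction k rule: int_induct[where k=0])
  case base then show ?case using assms by simp
next
  case (step1 i) then show ?case using assms(2)[of i] blockpos_succ[of T \<omega> i] by simp
next
  case (step2 i) then show ?case using assms(2)[of "i - 1"] blockpos_succ[of T \<omega> "i - 1"] by simp
qed

lemma blockpos_add:
  "blockpos T \<omega> (k + int m) = blockpos T \<omega> k + int (length (substw T (win \<omega> k m)))"
proof (induction m)
  case (Suc m)
  have "k + int (Suc m) = (k + int m) + 1" by simp
  then have "blockpos T \<omega> (k + int (Suc m)) = blockpos T \<omega> ((k + int m) + 1)" by (simp only:)
  also have "\<dots> = blockpos T \<omega> (k + int m) + int (length (T (\<omega> (k + int m))))"
    by (rule blockpos_succ)
  finally show ?case using Suc by (simp add: win_Suc substw_Cons)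
qed (simp add: win_def)

lemma blockpos_strict_mono:
  assumes ne: "\<forall>a. T a \<noteq> []" and "k < k'"
  shows "blockpos T \<omega> k < blockpos T \<omega> k'"
proof -
  define m where "m = nat (k' - k)"
  have k': "k' = k + int m" "0 < m" using assms m_def by auto
  have "int m \<le> int (length (substw T (win \<omega> k m)))"
    using length_substw_ge[OF ne, of "win \<omega> k m"] by simp
  moreover have "blockpos T \<omega> k' = blockpos T \<omega> k + int (length (substw T (win \<omega> k m)))"
    using blockpos_add[of T \<omega> k m] k'(1) by simp
  ultimately show ?thesis using k'(2) by linarith
qed

lemma blockpos_mono: "\<forall>a. T a \<noteq> [] \<Longrightarrow> k \<le> k' \<Longrightarrow> blockpos T \<omega> k \<le> blockpos T \<omega> k'"
  by (metis blockpos_strict_mono order_le_less)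

lemma blockpos_cover:
  assumes ne: "\<forall>a. T a \<noteq> []"
  shows "\<exists>k. blockpos T \<omega> k \<le> n \<and> n < blockpos T \<omega> (k + 1)"
proof (induction n rule: int_induct[where k=0])
  case base
  have "0 < blockpos T \<omega> 1" using blockpos_strict_mono[OF ne, of 0 1] by simp
  then show ?case by (intro exI[of _ 0]) simp
next
  case (step1 i)
  then obtain k where k: "blockpos T \<omega> k \<le> i" "i < blockpos T \<omega> (k + 1)" by blast
  show ?case
  proof (cases "i + 1 < blockpos T \<omega> (k + 1)")
    case True then show ?thesis using k by (intro exI[of _ k]) simp
  next
    case False
    then have "i + 1 = blockpos T \<omega> (k + 1)" using k by simp
    moreover have "blockpos T \<omega> (k + 1) < blockpos T \<omega> (k + 1 + 1)"
      using blockpos_strict_mono[OF ne] by simp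
    ultimately show ?thesis by (intro exI[of _ "k + 1"]) simp
  qed
next
  case (step2 i)
  then obtain k where k: "blockpos T \<omega> k \<le> i" "i < blockpos T \<omega> (k + 1)" by blast
  show ?case
  proof (cases "blockpos T \<omega> k \<le> i - 1")
    case True then show ?thesis using k by (intro exI[of _ k]) simp
  next
    case False
    then have "i = blockpos T \<omega> k" using k by simp
    moreover have "blockpos T \<omega> (k - 1) < blockpos T \<omega> k" using blockpos_strict_mono[OF ne] by simp
    ultimately show ?thesis by (intro exI[of _ "k - 1"]) simp
  qed
qed

lemma blockpos_cover_unique:
  assumes ne: "\<forall>a. T a \<noteq> []"
    and "blockpos T \<omega> k \<le> n" "n < blockpos T \<omega> (k + 1)"
    and "blockpos T \<omega> k' \<le> n" "n < blockpos T \<omega> (k' + 1)"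
  shows "k = k'"
proof (rule ccontr)
  assume "k \<noteq> k'"
  then have "k + 1 \<le> k' \<or> k' + 1 \<le> k" by linarith
  then show False
    using blockpos_mono[OF ne, of "k + 1" k' \<omega>] blockpos_mono[OF ne, of "k' + 1" k \<omega>] assms by auto
qed

definition is_substc :: "('a \<Rightarrow> 'a list) \<Rightarrow> 'a config \<Rightarrow> 'a config \<Rightarrow> bool" where
  "is_substc T \<omega> \<sigma> \<longleftrightarrow>
     (\<forall>k. \<forall>j < length (T (\<omega> k)). \<sigma> (blockpos T \<omega> k + int j) = T (\<omega> k) ! j)"

lemma is_substc_unique:
  assumes ne: "\<forall>a. T a \<noteq> []" and "is_substc T \<omega> \<sigma>" "is_substc T \<omega> \<sigma>'"
  shows "\<sigma> = \<sigma>'"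
proof
  fix n
  obtain k where k: "blockpos T \<omega> k \<le> n" "n < blockpos T \<omega> (k + 1)"
    using blockpos_cover[OF ne] by blast
  define j where "j = nat (n - blockpos T \<omega> k)"
  have n: "n = blockpos T \<omega> k + int j" using k j_def by simp
  have j: "j < length (T (\<omega> k))" using k n blockpos_succ[of T \<omega> k] by simp
  show "\<sigma> n = \<sigma>' n" using assms(2,3) j n unfolding is_substc_def by simp
qed

lemma is_substc_exists:
  assumes ne: "\<forall>a. T a \<noteq> []"
  shows "\<exists>\<sigma>. is_substc T \<omega> \<sigma>"
proof -
  define blk where "blk n = (THE k. blockpos T \<omega> k \<le> n \<and> n < blockpos T \<omega> (k + 1))" for n
  define \<sigma> where "\<sigma> n = T (\<omega> (blk n)) ! nat (n - blockpos T \<omega> (blk n))" for n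
  have "is_substc T \<omega> \<sigma>" unfolding is_substc_def
  proof (intro allI impI)
    fix k j assume j: "j < length (T (\<omega> k))"
    let ?n = "blockpos T \<omega> k + int j"
    have "blockpos T \<omega> k \<le> ?n \<and> ?n < blockpos T \<omega> (k + 1)" using j blockpos_succ[of T \<omega> k] by simp
    then have "blk ?n = k" unfolding blk_def using blockpos_cover_unique[OF ne] by blast
    then show "\<sigma> ?n = T (\<omega> k) ! j" unfolding \<sigma>_def by simp
  qed
  then show ?thesis by blast
qed

lemma is_substc_substc:
  assumes ne: "\<forall>a. T a \<noteq> []"
  shows "is_substc T \<omega> (substc T \<omega>)"
proof -
  have "substc T \<omega> = (THE \<sigma>. is_substc T \<omega> \<sigma>)" unfolding substc_def is_substc_def ..
  then show ?thesis using theI'[of "is_substc T \<omega>"] is_substc_exists[OF ne] is_substc_unique[OF ne]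
    by metis
qed

lemma substc_eqI: "\<forall>a. T a \<noteq> [] \<Longrightarrow> is_substc T \<omega> \<sigma> \<Longrightarrow> substc T \<omega> = \<sigma>"
  using is_substc_substc is_substc_unique by blast

lemma win_substc_block:
  assumes ne: "\<forall>a. T a \<noteq> []"
  shows "win (substc T \<omega>) (blockpos T \<omega> k) (length (T (\<omega> k))) = T (\<omega> k)"
  using is_substc_substc[OF ne, of \<omega>] unfolding is_substc_def by (intro nth_equalityI) auto

lemma win_substc:
  assumes ne: "\<forall>a. T a \<noteq> []"
  shows "win (substc T \<omega>) (blockpos T \<omega> k) (length (substw T (win \<omega> k m))) = substw T (win \<omega> k m)"
proof (induction m)
  case (Suc m)
  let ?X = "substw T (win \<omega> k m)"
  have e: "substw T (win \<omega> k (Suc m)) = ?X @ T (\<omega> (k + int m))"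
    by (simp add: win_Suc substw_Cons)
  have p: "blockpos T \<omega> k + int (length ?X) = blockpos T \<omega> (k + int m)"
    using blockpos_add[of T \<omega> k m] by simp
  show ?case
    unfolding e length_append win_add p using Suc win_substc_block[OF ne, of \<omega> "k + int m"] by simp
qed (simp add: win_def)

lemma substw_in_dict_substc: "\<forall>a. T a \<noteq> [] \<Longrightarrow> v \<in> dict \<omega> \<Longrightarrow> substw T v \<in> dict (substc T \<omega>)"
proof -
  assume ne: "\<forall>a. T a \<noteq> []" and v: "v \<in> dict \<omega>"
  then obtain n where vn: "v = win \<omega> n (length v)" "0 < length v" by (auto elim: dictE)
  have "substw T v \<noteq> []" using substw_neq_Nil[OF ne] vn by auto
  then show ?thesis using win_substc[OF ne, of \<omega> n "length v"] vn win_in_dict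
    by (metis length_greater_0_conv)
qed

lemma funpow_substw_in_dict:
  "\<forall>a. S a \<noteq> [] \<Longrightarrow> v \<in> dict \<omega> \<Longrightarrow> (substw S ^^ m) v \<in> dict ((substc S ^^ m) \<omega>)"
  by (induction m) (auto simp: substw_in_dict_substc)

lemma win_substc_subword_2block:
  assumes ne: "\<forall>a. T a \<noteq> []" and L: "0 < L" "\<forall>a. L \<le> length (T a) + 1"
  shows "\<exists>k. subword (win (substc T \<omega>) n L) (substw T (win \<omega> k 2))"
proof -
  obtain k where k: "blockpos T \<omega> k \<le> n" "n < blockpos T \<omega> (k + 1)"
    using blockpos_cover[OF ne] by blast
  have "blockpos T \<omega> (k + 2) = blockpos T \<omega> (k + 1) + int (length (T (\<omega> (k + 1))))"
    using blockpos_succ[of T \<omega> "k + 1"] by (simp add: add.assoc)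
  moreover have "blockpos T \<omega> (k + 2) = blockpos T \<omega> k + int (length (substw T (win \<omega> k 2)))"
    using blockpos_add[of T \<omega> k 2] by simp
  moreover have "L \<le> length (T (\<omega> (k + 1))) + 1" using L(2) by blast
  ultimately have "n + int L \<le> blockpos T \<omega> k + int (length (substw T (win \<omega> k 2)))"
    using k by linarith
  then have "subword (win (substc T \<omega>) n L) (win (substc T \<omega>) (blockpos T \<omega> k)
               (length (substw T (win \<omega> k 2))))"
    using k(1) L(1) by (intro subword_win_win) auto
  then show ?thesis using win_substc[OF ne] by metis
qed

lemma substc_substc:
  assumes neS: "\<forall>a. S a \<noteq> []" and neT: "\<forall>a. T a \<noteq> []"
  shows "substc S (substc T \<omega>) = substc (\<lambda>a. substw S (T a)) \<omega>"
proof -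
  let ?\<sigma> = "substc T \<omega>"
  let ?U = "\<lambda>a. substw S (T a)"
  have neU: "\<forall>a. ?U a \<noteq> []" using neS neT substw_neq_Nil by blast
  define g where "g k = blockpos S ?\<sigma> (blockpos T \<omega> k)" for k
  have blkT: "win ?\<sigma> (blockpos T \<omega> k) (length (T (\<omega> k))) = T (\<omega> k)" for k
    by (rule win_substc_block[OF neT])
  have g: "g k = blockpos ?U \<omega> k" for k
  proof (rule blockpos_unique)
    show "g 0 = 0" by (simp add: g_def)
    fix k
    show "g (k + 1) = g k + int (length (?U (\<omega> k)))"
      using blockpos_add[of S ?\<sigma> "blockpos T \<omega> k" "length (T (\<omega> k))"]
      unfolding g_def blkT blockpos_succ by simp
  qed
  have "is_substc ?U \<omega> (substc S ?\<sigma>)" unfolding is_substc_def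
  proof (intro allI impI)
    fix k j assume j: "j < length (?U (\<omega> k))"
    have w: "win (substc S ?\<sigma>) (g k) (length (?U (\<omega> k))) = ?U (\<omega> k)"
      using win_substc[OF neS, of ?\<sigma> "blockpos T \<omega> k" "length (T (\<omega> k))"] unfolding blkT g_def .
    show "substc S ?\<sigma> (blockpos ?U \<omega> k + int j) = ?U (\<omega> k) ! j"
      using arg_cong[OF w, of "\<lambda>xs. xs ! j"] j g[of k] by simp
  qed
  then show ?thesis using substc_eqI[OF neU] by metis
qed

lemma substc_singleton: "substc (\<lambda>a. [a]) \<omega> = \<omega>"
proof -
  have "blockpos (\<lambda>a. [a]) \<omega> k = k" for k
    using blockpos_unique[of "\<lambda>k. k" "\<lambda>a. [a]" \<omega> k] by simp
  then show ?thesis by (intro substc_eqI) (auto simp: is_substc_def)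
qed

lemma funpow_substc:
  assumes ne: "\<forall>a. S a \<noteq> []"
  shows "(substc S ^^ m) \<omega> = substc (\<lambda>a. (substw S ^^ m) [a]) \<omega>"
proof (induction m)
  case 0 then show ?case by (simp add: substc_singleton)
next
  case (Suc m)
  have "(substc S ^^ Suc m) \<omega> = substc S (substc (\<lambda>a. (substw S ^^ m) [a]) \<omega>)" using Suc by simp
  also have "\<dots> = substc (\<lambda>a. substw S ((substw S ^^ m) [a])) \<omega>"
    by (rule substc_substc[OF ne]) (use funpow_substw_neq_Nil[OF ne] in blast)
  finally show ?case by simp
qed

section \<open>The metric, closures and subshifts\<close>

definition agree :: "nat \<Rightarrow> 'a config \<Rightarrow> 'a config \<Rightarrow> bool" where
  "agree r x y \<longleftrightarrow> (\<forall>n::int. - int r < n \<and> n < int r \<longrightarrow> x n = y n)"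

lemma agree_0 [simp]: "agree 0 x y"
  by (auto simp: agree_def)

lemma agree_sym: "agree r x y \<Longrightarrow> agree r y x"
  unfolding agree_def by auto

lemma cdist_eq: "cdist x y = Inf {1 / (real r + 1) | r. agree r x y}"
  unfolding cdist_def agree_def by simp

lemma cdist_set_bdd_below: "bdd_below {1 / (real r + 1) | r. agree r x y}"
  by (rule bdd_belowI[of _ 0]) auto

lemma cdist_nonneg: "0 \<le> cdist x y"
  unfolding cdist_eq by (rule cInf_greatest) (blast intro: agree_0, auto)

lemma cdist_le_if_agree: "agree r x y \<Longrightarrow> cdist x y \<le> 1 / (real r + 1)"
  unfolding cdist_eq by (rule cInf_lower[OF _ cdist_set_bdd_below]) blast

lemma cdist_le_1: "cdist x y \<le> 1"
  using cdist_le_if_agree[OF agree_0] by simp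

lemma agree_if_cdist_less:
  assumes "cdist x y < 1 / (real r + 1)"
  shows "agree r x y"
proof -
  have ne: "{1 / (real r + 1) | r. agree r x y} \<noteq> {}" using agree_0 by blast
  obtain t where "t \<in> {1 / (real r + 1) | r. agree r x y}" "t < 1 / (real r + 1)"
    using cInf_lessD[OF ne] assms unfolding cdist_eq by blast
  then obtain r' where r': "agree r' x y" "1 / (real r' + 1) < 1 / (real r + 1)" by blast
  have "\<not> r' \<le> r"
  proof
    assume "r' \<le> r"
    then have "1 / (real r + 1) \<le> 1 / (real r' + 1)" by (intro divide_left_mono) auto
    with r'(2) show False by simp
  qed
  then show ?thesis using r'(1) unfolding agree_def by auto
qed

lemma cclosure_iff: "x \<in> cclosure X \<longleftrightarrow> (\<forall>r. \<exists>z\<in>X. agree r x z)"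
proof
  assume h: "x \<in> cclosure X"
  show "\<forall>r. \<exists>z\<in>X. agree r x z"
  proof
    fix r :: nat
    have "(0::real) < 1 / (real r + 1)" by simp
    then obtain z where "z \<in> X" "cdist x z < 1 / (real r + 1)"
      using h unfolding cclosure_def by blast
    then show "\<exists>z\<in>X. agree r x z" using agree_if_cdist_less by blast
  qed
next
  assume h: "\<forall>r. \<exists>z\<in>X. agree r x z"
  show "x \<in> cclosure X" unfolding cclosure_def
  proof (intro CollectI allI impI)
    fix \<epsilon> :: real assume "0 < \<epsilon>"
    then obtain r where "inverse (real (Suc r)) < \<epsilon>" using reals_Archimedean by blast
    then have r: "1 / (real r + 1) < \<epsilon>" by (simp add: inverse_eq_divide add.commute)
    obtain z where "z \<in> X" "agree r x z" using h by blast
    then show "\<exists>z\<in>X. cdist x z < \<epsilon>" using cdist_le_if_agree[of r x z] r by force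
  qed
qed

lemma subset_cclosure: "X \<subseteq> cclosure X"
proof
  fix x assume "x \<in> X"
  moreover have "agree r x x" for r by (simp add: agree_def)
  ultimately show "x \<in> cclosure X" unfolding cclosure_iff by blast
qed

lemma agree_if_win_eq:
  assumes "win x (- int r) (2 * r) = win z (- int r) (2 * r)"
  shows "agree r x z"
  unfolding agree_def
proof (intro allI impI)
  fix n :: int assume n: "- int r < n \<and> n < int r"
  define i where "i = nat (n + int r)"
  have i: "i < 2 * r" "n = - int r + int i" using n i_def by auto
  show "x n = z n" using arg_cong[OF assms, of "\<lambda>xs. xs ! i"] i by simp
qed

lemma win_eq_if_agree: "agree (Suc r) x z \<Longrightarrow> win x (- int r) (2 * r) = win z (- int r) (2 * r)"
proof (intro nth_equalityI)
  fix i assume "agree (Suc r) x z" and "i < length (win x (- int r) (2 * r))"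
  then show "win x (- int r) (2 * r) ! i = win z (- int r) (2 * r) ! i"
    unfolding agree_def by simp
qed simp

lemma agree_if_win_in_dictset:
  assumes inv: "\<forall>m. \<forall>\<omega>\<in>\<Omega>. shift m \<omega> \<in> \<Omega>" and w: "win x (- int r) (2 * r) \<in> dictset \<Omega>"
  shows "\<exists>y\<in>\<Omega>. agree r x y"
proof -
  obtain y where y: "y \<in> \<Omega>" "win x (- int r) (2 * r) \<in> dict y"
    using w unfolding dictset_def by blast
  obtain n where "win x (- int r) (2 * r) = win y n (2 * r)"
    using y(2) by (rule dictE) simp
  then have "agree r x (shift (- int r - n) y)"
    by (intro agree_if_win_eq) (simp add: win_shift)
  moreover have "shift (- int r - n) y \<in> \<Omega>" using inv y(1) by blast
  ultimately show ?thesis by blast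
qed

lemma dict_subset_dictset: "x \<in> \<Omega> \<Longrightarrow> dict x \<subseteq> dictset \<Omega>"
  unfolding dictset_def by blast

lemma in_subshift_if_dict_subset:
  assumes ss: "subshift \<Omega>" and d: "dict x \<subseteq> dictset \<Omega>"
  shows "x \<in> \<Omega>"
proof -
  have inv: "\<forall>m. \<forall>\<omega>\<in>\<Omega>. shift m \<omega> \<in> \<Omega>" and closed: "cclosure \<Omega> \<subseteq> \<Omega>"
    using ss unfolding subshift_def by auto
  have "\<exists>z\<in>\<Omega>. agree r x z" for r
  proof (cases "r = 0")
    case True
    then show ?thesis using ss unfolding subshift_def by auto
  next
    case False
    then have "win x (- int r) (2 * r) \<in> dictset \<Omega>" using d win_in_dict[of "2 * r" x] by auto
    then show ?thesis by (rule agree_if_win_in_dictset[OF inv])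
  qed
  then have "x \<in> cclosure \<Omega>" unfolding cclosure_iff by blast
  then show ?thesis using closed by blast
qed

lemma subshift_eq_if_dictset_eq:
  assumes "subshift \<Omega>1" "subshift \<Omega>2" "dictset \<Omega>1 = dictset \<Omega>2"
  shows "\<Omega>1 = \<Omega>2"
proof (intro subset_antisym subsetI)
  show "x \<in> \<Omega>2" if "x \<in> \<Omega>1" for x
    using in_subshift_if_dict_subset[OF assms(2)] dict_subset_dictset[OF that] assms(3) by simp
  show "x \<in> \<Omega>1" if "x \<in> \<Omega>2" for x
    using in_subshift_if_dict_subset[OF assms(1)] dict_subset_dictset[OF that] assms(3) by simp
qed

lemma OmegaS_spec:
  assumes "\<exists>\<Omega>. subshift \<Omega> \<and> dictset \<Omega> = legal S"
  shows "subshift (OmegaS S)" and "dictset (OmegaS S) = legal S"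
proof -
  obtain \<Omega> where \<Omega>: "subshift \<Omega> \<and> dictset \<Omega> = legal S" using assms by blast
  have "subshift (OmegaS S) \<and> dictset (OmegaS S) = legal S"
    unfolding OmegaS_def
  proof (rule theI[of _ \<Omega>])
    fix \<Omega>' assume "subshift \<Omega>' \<and> dictset \<Omega>' = legal S"
    then show "\<Omega>' = \<Omega>" using \<Omega> subshift_eq_if_dictset_eq[of \<Omega>' \<Omega>] by simp
  qed (rule \<Omega>)
  then show "subshift (OmegaS S)" and "dictset (OmegaS S) = legal S" by auto
qed

section \<open>Hausdorff distance to a subshift\<close>

lemma cINF_cdist_snd_le: "y \<in> B \<Longrightarrow> (INF y\<in>B. cdist x y) \<le> cdist x y"
  by (rule cINF_lower) (auto intro: bdd_belowI2[where m=0] cdist_nonneg)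

lemma cINF_cdist_fst_le: "x \<in> A \<Longrightarrow> (INF x\<in>A. cdist x y) \<le> cdist x y"
  by (rule cINF_lower) (auto intro: bdd_belowI2[where m=0] cdist_nonneg)

lemma hdist_le:
  assumes "A \<noteq> {}" "B \<noteq> {}"
    and h1: "\<forall>x\<in>A. \<exists>y\<in>B. cdist x y \<le> \<delta>" and h2: "\<forall>y\<in>B. \<exists>x\<in>A. cdist x y \<le> \<delta>"
  shows "hdist A B \<le> \<delta>"
proof -
  have "(SUP x\<in>A. INF y\<in>B. cdist x y) \<le> \<delta>"
  proof (rule cSUP_least[OF assms(1)])
    fix x assume "x \<in> A"
    then obtain y where "y \<in> B" "cdist x y \<le> \<delta>" using h1 by blast
    then show "(INF y\<in>B. cdist x y) \<le> \<delta>" using cINF_cdist_snd_le[of y B x] by linarith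
  qed
  moreover have "(SUP y\<in>B. INF x\<in>A. cdist x y) \<le> \<delta>"
  proof (rule cSUP_least[OF assms(2)])
    fix y assume "y \<in> B"
    then obtain x where "x \<in> A" "cdist x y \<le> \<delta>" using h2 by blast
    then show "(INF x\<in>A. cdist x y) \<le> \<delta>" using cINF_cdist_fst_le[of x A y] by linarith
  qed
  ultimately show ?thesis unfolding hdist_def by simp
qed

lemma hdist_ge:
  assumes "x \<in> A" "B \<noteq> {}" and "\<forall>y\<in>B. \<delta> \<le> cdist x y"
  shows "\<delta> \<le> hdist A B"
proof -
  obtain y0 where "y0 \<in> B" using assms(2) by blast
  have "bdd_above ((\<lambda>x. INF y\<in>B. cdist x y) ` A)"
  proof (rule bdd_aboveI2[where M=1])
    fix x' show "(INF y\<in>B. cdist x' y) \<le> 1"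
      using cINF_cdist_snd_le[OF \<open>y0 \<in> B\<close>, of x'] cdist_le_1[of x' y0] by linarith
  qed
  then have "(INF y\<in>B. cdist x y) \<le> (SUP x\<in>A. INF y\<in>B. cdist x y)"
    by (rule cSUP_upper[OF assms(1)])
  moreover have "\<delta> \<le> (INF y\<in>B. cdist x y)"
    using assms(3) by (intro cINF_greatest[OF assms(2)]) blast
  ultimately show ?thesis unfolding hdist_def by linarith
qed

lemma hdist_nonneg:
  assumes "A \<noteq> {}" "B \<noteq> {}"
  shows "0 \<le> hdist A B"
proof -
  obtain x where "x \<in> A" using assms(1) by blast
  show ?thesis by (rule hdist_ge[OF \<open>x \<in> A\<close> assms(2)]) (simp add: cdist_nonneg)
qed

lemma shift_in_orbit_closure: "shift m \<sigma> \<in> cclosure {shift m \<sigma> | m. True}"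
  by (rule subsetD[OF subset_cclosure]) blast

lemma shift_orbit_closed: "\<forall>m. \<forall>\<omega>\<in>{shift m \<sigma> | m. True}. shift m \<omega> \<in> {shift m \<sigma> | m. True}"
proof (intro allI ballI)
  fix m \<omega> assume "\<omega> \<in> {shift m \<sigma> | m. True}"
  then obtain m' where "\<omega> = shift m' \<sigma>" by blast
  then have "shift m \<omega> = shift (m + m') \<sigma>" by (simp add: shift_def algebra_simps)
  then show "shift m \<omega> \<in> {shift m \<sigma> | m. True}" by blast
qed

lemma hdist_orbit_closure_le:
  assumes ss: "subshift \<Omega>" and r: "0 < r"
    and words: "\<forall>u. length u = 2 * r \<longrightarrow> (u \<in> dict \<sigma> \<longleftrightarrow> u \<in> dictset \<Omega>)"
  shows "hdist (cclosure {shift m \<sigma> | m. True}) \<Omega> \<le> 1 / (real r + 1)"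
proof (rule hdist_le)
  let ?O = "{shift m \<sigma> | m. True}"
  note invO = shift_orbit_closed[of \<sigma>]
  have "\<sigma> = shift 0 \<sigma>" by (simp add: shift_def)
  then have \<sigma>O: "\<sigma> \<in> ?O" by blast
  have inv\<Omega>: "\<forall>m. \<forall>\<omega>\<in>\<Omega>. shift m \<omega> \<in> \<Omega>" using ss unfolding subshift_def by blast
  have win2r: "win x (- int r) (2 * r) \<in> dict x" for x using r by (intro win_in_dict) simp
  show "\<forall>x\<in>cclosure ?O. \<exists>y\<in>\<Omega>. cdist x y \<le> 1 / (real r + 1)"
  proof
    fix x assume "x \<in> cclosure ?O"
    then obtain m where "agree (Suc r) x (shift m \<sigma>)" unfolding cclosure_iff by blast
    then have "win x (- int r) (2 * r) = win \<sigma> (- int r - m) (2 * r)"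
      by (simp add: win_eq_if_agree win_shift)
    then have "win x (- int r) (2 * r) \<in> dict \<sigma>" using r win_in_dict[of "2 * r" \<sigma>] by simp
    then have "win x (- int r) (2 * r) \<in> dictset \<Omega>" using words by simp
    then obtain y where "y \<in> \<Omega>" "agree r x y" using agree_if_win_in_dictset[OF inv\<Omega>] by blast
    then show "\<exists>y\<in>\<Omega>. cdist x y \<le> 1 / (real r + 1)" using cdist_le_if_agree by blast
  qed
  show "\<forall>y\<in>\<Omega>. \<exists>x\<in>cclosure ?O. cdist x y \<le> 1 / (real r + 1)"
  proof
    fix y assume "y \<in> \<Omega>"
    then have "win y (- int r) (2 * r) \<in> dictset \<Omega>" using win2r dict_subset_dictset by blast
    then have "win y (- int r) (2 * r) \<in> dict \<sigma>" using words by simp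
    then have "win y (- int r) (2 * r) \<in> dictset ?O" using \<sigma>O unfolding dictset_def by blast
    then obtain x where x: "x \<in> ?O" "agree r y x" using agree_if_win_in_dictset[OF invO] by blast
    have "x \<in> cclosure ?O" using subset_cclosure[of ?O] x(1) by blast
    moreover have "cdist x y \<le> 1 / (real r + 1)" using cdist_le_if_agree[OF agree_sym[OF x(2)]] .
    ultimately show "\<exists>x\<in>cclosure ?O. cdist x y \<le> 1 / (real r + 1)" by blast
  qed
  show "cclosure ?O \<noteq> {}" using shift_in_orbit_closure by blast
  show "\<Omega> \<noteq> {}" using ss unfolding subshift_def by blast
qed

lemma hdist_orbit_closure_ge:
  assumes "\<Omega> \<noteq> {}" and u: "u \<in> dict \<sigma>" "u \<notin> dictset \<Omega>"
  shows "1 / (real (length u) + 1) \<le> hdist (cclosure {shift m \<sigma> | m. True}) \<Omega>"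
proof -
  obtain q where q: "u = win \<sigma> q (length u)" "0 < length u" using u(1) by (rule dictE)
  let ?x = "shift (- q) \<sigma>"
  have "1 / (real (length u) + 1) \<le> cdist ?x y" if y: "y \<in> \<Omega>" for y
  proof (rule ccontr)
    assume "\<not> 1 / (real (length u) + 1) \<le> cdist ?x y"
    then have "agree (length u) ?x y" by (intro agree_if_cdist_less) simp
    then have "win ?x 0 (length u) = win y 0 (length u)"
      unfolding agree_def by (intro nth_equalityI) auto
    moreover have "win ?x 0 (length u) = u" using q(1) by (simp add: win_shift)
    ultimately have "u \<in> dict y" using q(2) win_in_dict by metis
    then show False using y u(2) dict_subset_dictset by blast
  qed
  then show ?thesis using hdist_ge[OF shift_in_orbit_closure assms(1)] by blast
qed

section \<open>Paths in the graph \<open>G(S)\<close>\<close>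

lemma Gpath_iff_successively: "Gpath S us \<longleftrightarrow> 2 \<le> length us \<and> successively (Gedge S) us"
proof -
  have "(\<forall>j. 0 < j \<and> j < length us \<longrightarrow> Gedge S (us ! (j - 1)) (us ! j))
        \<longleftrightarrow> (\<forall>i. Suc i < length us \<longrightarrow> Gedge S (us ! i) (us ! Suc i))"
  proof
    assume h: "\<forall>j. 0 < j \<and> j < length us \<longrightarrow> Gedge S (us ! (j - 1)) (us ! j)"
    show "\<forall>i. Suc i < length us \<longrightarrow> Gedge S (us ! i) (us ! Suc i)"
      using h by (metis diff_Suc_1 zero_less_Suc)
  next
    assume h: "\<forall>i. Suc i < length us \<longrightarrow> Gedge S (us ! i) (us ! Suc i)"
    show "\<forall>j. 0 < j \<and> j < length us \<longrightarrow> Gedge S (us ! (j - 1)) (us ! j)"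
    proof (intro allI impI)
      fix j assume j: "0 < j \<and> j < length us"
      then have "Suc (j - 1) = j" by simp
      then show "Gedge S (us ! (j - 1)) (us ! j)" using h j by metis
    qed
  qed
  then show ?thesis unfolding Gpath_def successively_conv_nth by blast
qed

lemma successively_infix: "successively P (xs @ ys @ zs) \<Longrightarrow> successively P ys"
  by (simp add: successively_append_iff)

lemma Gpath_vertex:
  assumes "Gpath S us" "v \<in> set us"
  shows "length v = 2 \<and> v \<notin> legal S"
proof -
  obtain i where i: "i < length us" "v = us ! i" using assms(2) by (auto simp: in_set_conv_nth)
  have len: "2 \<le> length us" and succ: "successively (Gedge S) us"
    using assms(1) unfolding Gpath_iff_successively by auto
  show ?thesis
  proof (cases "Suc i < length us")
    case True
    then show ?thesis using successively_nth[OF succ True] i(2) unfolding Gedge_def by blast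
  next
    case False
    then have "Suc (i - 1) < length us" "Suc (i - 1) = i" using i(1) len by auto
    then show ?thesis using successively_nth[OF succ, of "i - 1"] i(2) unfolding Gedge_def by metis
  qed
qed

lemma Gpath_hd_length:
  assumes "Gpath S us"
  shows "length (hd us) = 2"
proof -
  have "us \<noteq> []" using assms by (auto simp: Gpath_def)
  then show ?thesis using Gpath_vertex[OF assms] hd_in_set by blast
qed

lemma successively_pump:
  "successively P (x # xs @ [x]) \<Longrightarrow> successively P (concat (replicate m (x # xs)) @ [x])"
proof (induction m)
  case (Suc m)
  have "successively P (x # xs)" and "P (last (x # xs)) x"
    using Suc.prems by (simp_all add: successively_append_iff flip: append_Cons)
  moreover have "hd (concat (replicate m (x # xs)) @ [x]) = x" by (cases m) auto
  ultimately have "successively P ((x # xs) @ (concat (replicate m (x # xs)) @ [x]))"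
    using Suc by (intro successively_append_iff[THEN iffD2]) auto
  then show ?case by simp
qed simp

definition Gpaths_unbounded :: "('a \<Rightarrow> 'a list) \<Rightarrow> 'a list set \<Rightarrow> bool" where
  "Gpaths_unbounded S D \<longleftrightarrow> (\<forall>n. \<exists>us. Gpath S us \<and> hd us \<in> D \<and> n \<le> path_len us)"

lemma Gpaths_unbounded_if_closed_subpath:
  assumes us: "Gpath S us" "hd us \<in> D" and vs: "subpath S vs us" "closed_path vs"
  shows "Gpaths_unbounded S D"
proof -
  obtain i k where "vs = take k (drop i us)" using vs(1) unfolding subpath_def by blast
  then obtain p s where us_eq: "us = p @ vs @ s" by (metis append_take_drop_id)
  have "2 \<le> length vs" and "successively (Gedge S) vs"
    using vs(1) unfolding subpath_def Gpath_iff_successively by auto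
  obtain x ys where x: "vs = x # ys" using \<open>2 \<le> length vs\<close> by (cases vs) auto
  moreover have "ys \<noteq> []" using \<open>2 \<le> length vs\<close> x by auto
  ultimately have "last ys = x" using vs(2) unfolding closed_path_def by simp
  then obtain xs where vs_eq: "vs = x # xs @ [x]" using x \<open>ys \<noteq> []\<close> by (metis append_butlast_last_id)
  have cycle: "successively (Gedge S) (x # xs @ [x])"
    using \<open>successively (Gedge S) vs\<close> vs_eq by simp
  have "successively (Gedge S) (p @ [x] @ (xs @ [x] @ s))"
    using us(1) unfolding Gpath_iff_successively us_eq vs_eq by simp
  then have entry: "successively (Gedge S) p" "p = [] \<or> Gedge S (last p) x"
    by (auto simp: successively_append_iff)
  show ?thesis unfolding Gpaths_unbounded_def
  proof
    fix n
    define ws where "ws = p @ concat (replicate (Suc n) (x # xs)) @ [x]"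
    have "successively (Gedge S) ws"
      using entry successively_pump[OF cycle, of "Suc n"]
      unfolding ws_def by (auto simp: successively_append_iff)
    moreover have "Suc n + 1 \<le> length ws"
      unfolding ws_def by (simp add: length_concat sum_list_replicate)
    moreover have "hd ws = hd us" unfolding ws_def us_eq vs_eq by (cases p) auto
    ultimately show "\<exists>ws. Gpath S ws \<and> hd ws \<in> D \<and> n \<le> path_len ws"
      using us(2) unfolding Gpath_iff_successively path_len_def by (intro exI[of _ ws]) auto
  qed
qed

lemma closed_subpath_if_long:
  fixes S :: "'a::finite \<Rightarrow> 'a list"
  assumes p: "Gpath S us" and l: "card (UNIV :: 'a set) ^ 2 \<le> path_len us"
  shows "\<exists>vs. subpath S vs us \<and> closed_path vs"
proof -
  have "card (set us) \<le> card {xs :: 'a list. set xs \<subseteq> UNIV \<and> length xs = 2}"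
    by (rule card_mono[OF finite_lists_length_eq[OF finite_UNIV]]) (use Gpath_vertex[OF p] in auto)
  also have "\<dots> = card (UNIV :: 'a set) ^ 2" by (rule card_lists_length_eq[OF finite_UNIV])
  finally have "\<not> distinct us" using l p distinct_card unfolding path_len_def Gpath_def by fastforce
  then obtain as bs cs y where us_eq: "us = as @ [y] @ bs @ [y] @ cs"
    using not_distinct_decomp by blast
  define vs where "vs = y # bs @ [y]"
  have "successively (Gedge S) (as @ vs @ cs)"
    using p unfolding Gpath_iff_successively us_eq vs_def by simp
  then have "Gpath S vs" unfolding Gpath_iff_successively vs_def
    using successively_infix by fastforce
  moreover have "vs = take (length vs) (drop (length as) us)" unfolding us_eq vs_def by simp
  moreover have "closed_path vs" unfolding closed_path_def vs_def by simp
  ultimately show ?thesis unfolding subpath_def by blast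
qed

lemma Gpaths_unbounded_iff_closed_subpath:
  fixes S :: "'a::finite \<Rightarrow> 'a list"
  shows "Gpaths_unbounded S D \<longleftrightarrow>
           (\<exists>us vs. Gpath S us \<and> hd us \<in> D \<and> subpath S vs us \<and> closed_path vs)"
proof
  assume "Gpaths_unbounded S D"
  then obtain us where "Gpath S us" "hd us \<in> D" "card (UNIV :: 'a set) ^ 2 \<le> path_len us"
    unfolding Gpaths_unbounded_def by blast
  then show "\<exists>us vs. Gpath S us \<and> hd us \<in> D \<and> subpath S vs us \<and> closed_path vs"
    using closed_subpath_if_long by blast
qed (use Gpaths_unbounded_if_closed_subpath in blast)

lemma Gpaths_unbounded_iff_long:
  fixes S :: "'a::finite \<Rightarrow> 'a list"
  shows "Gpaths_unbounded S D \<longleftrightarrow> (\<exists>us. Gpath S us \<and> hd us \<in> D \<and> card (UNIV :: 'a set) ^ 2 \<le> path_len us)"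
proof
  assume "\<exists>us. Gpath S us \<and> hd us \<in> D \<and> card (UNIV :: 'a set) ^ 2 \<le> path_len us"
  then show "Gpaths_unbounded S D"
    using closed_subpath_if_long Gpaths_unbounded_if_closed_subpath by blast
qed (auto simp: Gpaths_unbounded_def)

section \<open>Illegal 2-words under iteration\<close>

lemma funpow_le_split: "m \<le> n \<Longrightarrow> (f ^^ n) x = (f ^^ (n - m)) ((f ^^ m) x)"
  by (metis funpow_add le_add_diff_inverse2 comp_apply)

lemma Gedge_in_dict_substc:
  "\<forall>a. S a \<noteq> [] \<Longrightarrow> u \<in> dict \<omega> \<Longrightarrow> Gedge S u w \<Longrightarrow> w \<in> dict (substc S \<omega>)"
  using dict_subword[OF substw_in_dict_substc] unfolding Gedge_def by blast

lemma last_Gchain_in_dict: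
  assumes ne: "\<forall>a. S a \<noteq> []"
  shows "successively (Gedge S) us \<Longrightarrow> us \<noteq> [] \<Longrightarrow> hd us \<in> dict \<omega>
           \<Longrightarrow> last us \<in> dict ((substc S ^^ (length us - 1)) \<omega>)"
proof (induction us rule: rev_induct)
  case (snoc u us)
  show ?case
  proof (cases "us = []")
    case False
    then have "last us \<in> dict ((substc S ^^ (length us - 1)) \<omega>)" and "Gedge S (last us) u"
      using snoc by (auto simp: successively_append_iff)
    then have "u \<in> dict (substc S ((substc S ^^ (length us - 1)) \<omega>))"
      by (rule Gedge_in_dict_substc[OF ne])
    then show ?thesis using False by (cases "length us") auto
  qed (use snoc in simp)
qed simp

lemma Gedge_into_illegal_2word:
  assumes ne: "\<forall>a. S a \<noteq> []"
    and u: "u \<in> dict (substc S \<omega>)" "length u = 2" "u \<notin> legal S"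
  shows "\<exists>u'\<in>dict \<omega>. Gedge S u' u"
proof -
  obtain n where "u = win (substc S \<omega>) n 2" using u(1,2) by (metis dictE)
  moreover have "\<forall>a. 2 \<le> length (S a) + 1" using ne by (simp add: Suc_leI)
  ultimately obtain k where sub: "subword u (substw S (win \<omega> k 2))"
    using win_substc_subword_2block[OF ne] by (metis zero_less_numeral)
  have "win \<omega> k 2 \<notin> legal S"
    using legal_substw[OF ne] legal_subword sub u(3) by blast
  then have "Gedge S (win \<omega> k 2) u" using sub u unfolding Gedge_def by simp
  then show ?thesis using win_in_dict[of 2 \<omega> k] by auto
qed

lemma Gchain_into_illegal_2word:
  assumes ne: "\<forall>a. S a \<noteq> []"
  shows "u \<in> dict ((substc S ^^ n) \<omega>) \<Longrightarrow> length u = 2 \<Longrightarrow> u \<notin> legal S \<Longrightarrow>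
     \<exists>us. successively (Gedge S) us \<and> length us = Suc n \<and> hd us \<in> dict \<omega> \<and> last us = u"
proof (induction n arbitrary: u)
  case 0
  then show ?case by (intro exI[of _ "[u]"]) simp
next
  case (Suc n)
  then have "u \<in> dict (substc S ((substc S ^^ n) \<omega>))" by simp
  then obtain u' where u': "u' \<in> dict ((substc S ^^ n) \<omega>)" "Gedge S u' u"
    using Gedge_into_illegal_2word[OF ne _ Suc.prems(2,3)] by blast
  then obtain us where us: "successively (Gedge S) us" "length us = Suc n" "hd us \<in> dict \<omega>" "last us = u'"
    using Suc.IH unfolding Gedge_def by blast
  then have "successively (Gedge S) (us @ [u])" using u'(2) by (auto simp: successively_append_iff)
  moreover have "us \<noteq> []" using us(2) by auto
  ultimately show ?case using us by (intro exI[of _ "us @ [u]"]) (auto simp: hd_append)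
qed

lemma Gpaths_unbounded_iff_illegal_2words:
  assumes ne: "\<forall>a. S a \<noteq> []"
  shows "Gpaths_unbounded S (dict \<omega>) \<longleftrightarrow>
           (\<forall>n. \<exists>u\<in>dict ((substc S ^^ n) \<omega>). length u = 2 \<and> u \<notin> legal S)"
proof
  assume unbounded: "Gpaths_unbounded S (dict \<omega>)"
  show "\<forall>n. \<exists>u\<in>dict ((substc S ^^ n) \<omega>). length u = 2 \<and> u \<notin> legal S"
  proof
    fix n
    obtain us where us: "Gpath S us" "hd us \<in> dict \<omega>" "n \<le> path_len us"
      using unbounded unfolding Gpaths_unbounded_def by blast
    let ?ws = "take (Suc n) us"
    have "Suc n \<le> length us" using us(1,3) unfolding path_len_def Gpath_def by linarith
    then have ws: "length ?ws = Suc n" "hd ?ws = hd us" "?ws \<noteq> []" by (auto simp: hd_take)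
    then have "last ?ws \<in> set us" using last_in_set in_set_takeD by metis
    have "successively (Gedge S) ?ws"
      using successively_append_iff[of "Gedge S" ?ws "drop (Suc n) us"] us(1)
      unfolding Gpath_iff_successively by simp
    moreover have "hd ?ws \<in> dict \<omega>" using ws(2) us(2) by simp
    ultimately have "last ?ws \<in> dict ((substc S ^^ (length ?ws - 1)) \<omega>)"
      using last_Gchain_in_dict[OF ne _ ws(3)] by blast
    then show "\<exists>u\<in>dict ((substc S ^^ n) \<omega>). length u = 2 \<and> u \<notin> legal S"
      using ws(1) Gpath_vertex[OF us(1) \<open>last ?ws \<in> set us\<close>] by auto
  qed
next
  assume persist: "\<forall>n. \<exists>u\<in>dict ((substc S ^^ n) \<omega>). length u = 2 \<and> u \<notin> legal S"
  show "Gpaths_unbounded S (dict \<omega>)" unfolding Gpaths_unbounded_def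
  proof
    fix n
    obtain u where "u \<in> dict ((substc S ^^ Suc n) \<omega>)" "length u = 2" "u \<notin> legal S"
      using persist by blast
    then obtain us where us: "successively (Gedge S) us" "length us = Suc (Suc n)" "hd us \<in> dict \<omega>"
      using Gchain_into_illegal_2word[OF ne] by blast
    then have "Gpath S us \<and> hd us \<in> dict \<omega> \<and> n \<le> path_len us"
      unfolding Gpath_iff_successively path_len_def by simp
    then show "\<exists>us. Gpath S us \<and> hd us \<in> dict \<omega> \<and> n \<le> path_len us" by blast
  qed
qed

section \<open>Convergence of the hulls\<close>

lemma legal_word_of_length:
  assumes "\<exists>\<Omega>. subshift \<Omega> \<and> dictset \<Omega> = legal S" and "0 < L"
  shows "\<exists>u\<in>legal S. length u = L"
proof -
  obtain \<Omega> \<omega> where "dictset \<Omega> = legal S" "\<omega> \<in> \<Omega>"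
    using assms(1) unfolding subshift_def by blast
  then have "win \<omega> 0 L \<in> legal S" using win_in_dict[OF assms(2)] dict_subset_dictset by blast
  then show ?thesis using length_win by blast
qed

text \<open>Primitivity and the existence of \<open>\<Omega>(S)\<close>, which provides legal words of every length,
  force the images \<open>S\<^sup>m(a)\<close> to become long.\<close>

lemma length_funpow_substw_eventually_ge:
  assumes ne: "\<forall>a. S a \<noteq> []" and prim: "primitive S"
    and hull: "\<exists>\<Omega>. subshift \<Omega> \<and> dictset \<Omega> = legal S"
  shows "\<exists>m. \<forall>m'\<ge>m. \<forall>a. L \<le> length ((substw S ^^ m') [a])"
proof (cases "L = 0")
  case False
  obtain u where "u \<in> legal S" "length u = L" using legal_word_of_length[OF hull] False by blast
  then obtain a0 n where "subword u ((substw S ^^ n) [a0])" unfolding legal_def by blast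
  then have Ln: "L \<le> length ((substw S ^^ n) [a0])" using subword_length_le \<open>length u = L\<close> by blast
  obtain p where p: "\<forall>a b. subword [b] ((substw S ^^ p) [a])" using prim unfolding primitive_def by blast
  have "L \<le> length ((substw S ^^ m') [b])" if "n + p \<le> m'" for m' b
  proof -
    have "subword ((substw S ^^ n) [a0]) ((substw S ^^ n) ((substw S ^^ p) [b]))"
      using subword_funpow_substw[OF ne] p by blast
    then have "L \<le> length ((substw S ^^ (n + p)) [b])"
      using Ln subword_length_le by (fastforce simp: funpow_add)
    also have "\<dots> \<le> length ((substw S ^^ (m' - (n + p))) ((substw S ^^ (n + p)) [b]))"
      by (rule length_funpow_substw_ge[OF ne])
    also have "\<dots> = length ((substw S ^^ m') [b])"
      using funpow_le_split[OF that, of "substw S" "[b]"] by simp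
    finally show ?thesis .
  qed
  then show ?thesis by blast
qed simp

lemma letters_eventually_in_dict:
  assumes ne: "\<forall>a. S a \<noteq> []" and prim: "primitive S"
  shows "\<forall>\<^sub>F m in sequentially. \<forall>b. [b] \<in> dict ((substc S ^^ m) \<omega>)"
proof -
  obtain p where p: "\<forall>a b. subword [b] ((substw S ^^ p) [a])" using prim unfolding primitive_def by blast
  have "[b] \<in> dict ((substc S ^^ m) \<omega>)" if "p \<le> m" for m b
  proof -
    let ?\<omega> = "(substc S ^^ (m - p)) \<omega>"
    have "[?\<omega> 0] \<in> dict ?\<omega>" using win_in_dict[of 1 ?\<omega> 0] by (simp add: win_def)
    then have "(substw S ^^ p) [?\<omega> 0] \<in> dict ((substc S ^^ p) ?\<omega>)" by (rule funpow_substw_in_dict[OF ne])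
    moreover have "(substc S ^^ p) ?\<omega> = (substc S ^^ m) \<omega>"
      using funpow_le_split[of "m - p" m "substc S" \<omega>] that by simp
    ultimately show ?thesis using dict_subword p by metis
  qed
  then show ?thesis unfolding eventually_sequentially by blast
qed

lemma legal_eventually_in_dict:
  assumes ne: "\<forall>a. S a \<noteq> []" and prim: "primitive S" and u: "u \<in> legal S"
  shows "\<forall>\<^sub>F N in sequentially. u \<in> dict ((substc S ^^ N) \<omega>)"
proof -
  obtain a n where an: "subword u ((substw S ^^ n) [a])" using u unfolding legal_def by blast
  have "\<forall>\<^sub>F m in sequentially. u \<in> dict ((substc S ^^ (m + n)) \<omega>)"
    using letters_eventually_in_dict[OF ne prim, of \<omega>]
  proof (rule eventually_mono)
    fix m assume "\<forall>b. [b] \<in> dict ((substc S ^^ m) \<omega>)"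
    then have "(substw S ^^ n) [a] \<in> dict ((substc S ^^ n) ((substc S ^^ m) \<omega>))"
      by (intro funpow_substw_in_dict[OF ne]) blast
    moreover have "(substc S ^^ (m + n)) \<omega> = (substc S ^^ n) ((substc S ^^ m) \<omega>)"
      by (simp only: add.commute[of m n] funpow_add comp_apply)
    ultimately show "u \<in> dict ((substc S ^^ (m + n)) \<omega>)" using an dict_subword by metis
  qed
  then show ?thesis by (rule eventually_sequentially_seg[THEN iffD1])
qed

text \<open>Once all 2-words are legal, every short window of a later iterate lies in the image of a
  legal 2-word, the images of letters being long.\<close>

lemma words_eventually_legal:
  assumes ne: "\<forall>a. S a \<noteq> []" and prim: "primitive S"
    and hull: "\<exists>\<Omega>. subshift \<Omega> \<and> dictset \<Omega> = legal S"
    and K: "\<forall>u\<in>dict ((substc S ^^ K) \<omega>). length u = 2 \<longrightarrow> u \<in> legal S"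
    and L: "0 < L"
  shows "\<forall>\<^sub>F N in sequentially. \<forall>u\<in>dict ((substc S ^^ N) \<omega>). length u = L \<longrightarrow> u \<in> legal S"
proof -
  obtain m where m: "\<forall>m'\<ge>m. \<forall>a. L \<le> length ((substw S ^^ m') [a])"
    using length_funpow_substw_eventually_ge[OF ne prim hull] by blast
  have "u \<in> legal S" if N: "K + m \<le> N" and u: "u \<in> dict ((substc S ^^ N) \<omega>)" "length u = L" for N u
  proof -
    define T where "T a = (substw S ^^ (N - K)) [a]" for a
    let ?\<omega> = "(substc S ^^ K) \<omega>"
    have neT: "\<forall>a. T a \<noteq> []" unfolding T_def using funpow_substw_neq_Nil[OF ne] by blast
    have "L \<le> length (T a)" for a unfolding T_def using m[rule_format, of "N - K" a] N by simp
    then have lenT: "\<forall>a. L \<le> length (T a) + 1" by (simp add: le_Suc_eq)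
    have "(substc S ^^ N) \<omega> = (substc S ^^ (N - K)) ?\<omega>"
      using funpow_le_split[of K N "substc S" \<omega>] N by simp
    also have "\<dots> = substc T ?\<omega>" unfolding T_def by (rule funpow_substc[OF ne])
    finally obtain n where "u = win (substc T ?\<omega>) n L" using u by (metis dictE)
    then obtain k where sub: "subword u (substw T (win ?\<omega> k 2))"
      using win_substc_subword_2block[OF neT L lenT] by blast
    have "win ?\<omega> k 2 \<in> legal S" using K win_in_dict[of 2 ?\<omega> k] by simp
    then have "substw T (win ?\<omega> k 2) \<in> legal S"
      unfolding T_def substw_funpow_letters by (rule legal_funpow_substw[OF ne])
    then show ?thesis using sub legal_subword by blast
  qed
  then show ?thesis unfolding eventually_sequentially by blast
qed

lemma IHS_converges_if_2words_legal:
  assumes ne: "\<forall>a. S a \<noteq> []" and prim: "primitive S"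
    and hull: "\<exists>\<Omega>. subshift \<Omega> \<and> dictset \<Omega> = legal S"
    and K: "\<forall>u\<in>dict ((substc S ^^ K) \<omega>0). length u = 2 \<longrightarrow> u \<in> legal S"
  shows "(\<lambda>n. hdist (IHS S \<omega>0 n) (OmegaS S)) \<longlonglongrightarrow> 0"
proof (rule order_tendstoI)
  have IHS_ne: "IHS S \<omega>0 n \<noteq> {}" for n unfolding IHS_def using shift_in_orbit_closure by blast
  have \<Omega>_ne: "OmegaS S \<noteq> {}" using OmegaS_spec(1)[OF hull] unfolding subshift_def by blast
  show "\<forall>\<^sub>F n in sequentially. a < hdist (IHS S \<omega>0 n) (OmegaS S)" if "a < 0" for a :: real
    using hdist_nonneg[OF IHS_ne \<Omega>_ne] that by (intro always_eventually allI) (meson less_le_trans)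
  fix \<epsilon> :: real assume "0 < \<epsilon>"
  then obtain r0 where "inverse (real (Suc r0)) < \<epsilon>" using reals_Archimedean by blast
  moreover have "1 / (real (Suc r0) + 1) \<le> inverse (real (Suc r0))"
    by (simp add: inverse_eq_divide frac_le)
  ultimately have r: "1 / (real (Suc r0) + 1) < \<epsilon>" by linarith
  let ?r = "Suc r0"
  have finite_legal: "finite {u \<in> legal S. length u = 2 * ?r}"
    by (rule finite_subset[OF _ finite_lists_length_eq[OF finite_UNIV, of "2 * ?r"]]) auto
  have "\<forall>\<^sub>F N in sequentially. \<forall>u\<in>{u \<in> legal S. length u = 2 * ?r}. u \<in> dict ((substc S ^^ N) \<omega>0)"
    by (rule eventually_ball_finite[OF finite_legal]) (use legal_eventually_in_dict[OF ne prim] in blast)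
  moreover have "\<forall>\<^sub>F N in sequentially. \<forall>u\<in>dict ((substc S ^^ N) \<omega>0). length u = 2 * ?r \<longrightarrow> u \<in> legal S"
    by (rule words_eventually_legal[OF ne prim hull K]) simp
  ultimately have "\<forall>\<^sub>F N in sequentially. hdist (IHS S \<omega>0 N) (OmegaS S) \<le> 1 / (real ?r + 1)"
  proof eventually_elim
    case (elim N)
    then have words:
        "\<forall>u. length u = 2 * ?r \<longrightarrow> (u \<in> dict ((substc S ^^ N) \<omega>0) \<longleftrightarrow> u \<in> dictset (OmegaS S))"
      using OmegaS_spec(2)[OF hull] by blast
    show ?case unfolding IHS_def by (rule hdist_orbit_closure_le[OF OmegaS_spec(1)[OF hull] _ words]) simp
  qed
  then show "\<forall>\<^sub>F n in sequentially. hdist (IHS S \<omega>0 n) (OmegaS S) < \<epsilon>"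
    using r by (auto elim: eventually_mono)
qed

lemma IHS_converges_iff_Gpaths_bounded:
  assumes ne: "\<forall>a. S a \<noteq> []" and prim: "primitive S"
    and hull: "\<exists>\<Omega>. subshift \<Omega> \<and> dictset \<Omega> = legal S"
  shows "(\<lambda>n. hdist (IHS S \<omega>0 n) (OmegaS S)) \<longlonglongrightarrow> 0 \<longleftrightarrow> \<not> Gpaths_unbounded S (dict \<omega>0)"
proof
  assume lim: "(\<lambda>n. hdist (IHS S \<omega>0 n) (OmegaS S)) \<longlonglongrightarrow> 0"
  have "\<forall>\<^sub>F n in sequentially. hdist (IHS S \<omega>0 n) (OmegaS S) < 1 / 3"
    using order_tendstoD(2)[OF lim, of "1 / 3"] by simp
  then obtain n where n: "hdist (IHS S \<omega>0 n) (OmegaS S) < 1 / 3"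
    unfolding eventually_sequentially by blast
  show "\<not> Gpaths_unbounded S (dict \<omega>0)"
  proof
    assume "Gpaths_unbounded S (dict \<omega>0)"
    then obtain u where u: "u \<in> dict ((substc S ^^ n) \<omega>0)" "length u = 2" "u \<notin> legal S"
      unfolding Gpaths_unbounded_iff_illegal_2words[OF ne] by blast
    have "OmegaS S \<noteq> {}" using OmegaS_spec(1)[OF hull] unfolding subshift_def by blast
    moreover have "u \<notin> dictset (OmegaS S)" using u(3) OmegaS_spec(2)[OF hull] by simp
    ultimately have "1 / (real (length u) + 1) \<le> hdist (IHS S \<omega>0 n) (OmegaS S)"
      unfolding IHS_def using hdist_orbit_closure_ge u(1) by blast
    then show False using n u(2) by simp
  qed
next
  assume "\<not> Gpaths_unbounded S (dict \<omega>0)"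
  then obtain K where "\<forall>u\<in>dict ((substc S ^^ K) \<omega>0). length u = 2 \<longrightarrow> u \<in> legal S"
    unfolding Gpaths_unbounded_iff_illegal_2words[OF ne] by blast
  then show "(\<lambda>n. hdist (IHS S \<omega>0 n) (OmegaS S)) \<longlonglongrightarrow> 0"
    by (rule IHS_converges_if_2words_legal[OF ne prim hull])
qed

theorem theorem1:
  fixes S :: "'a::finite \<Rightarrow> 'a list" and \<omega>0 :: "'a config"
  assumes nonempty_images: "\<forall>a. S a \<noteq> []"
    and prim: "primitive S"
    and hull_exists: "\<exists>\<Omega>. subshift \<Omega> \<and> dictset \<Omega> = legal S"
  shows "(((\<lambda>n. hdist (IHS S \<omega>0 n) (OmegaS S)) \<longlonglongrightarrow> 0)
     \<longleftrightarrow> (\<forall>us. Gpath S us \<and> hd us \<in> dict \<omega>0 \<and> length (hd us) = 2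
              \<longrightarrow> \<not> (\<exists>vs. subpath S vs us \<and> closed_path vs)))
   \<and> ((\<forall>us. Gpath S us \<and> hd us \<in> dict \<omega>0 \<and> length (hd us) = 2
              \<longrightarrow> \<not> (\<exists>vs. subpath S vs us \<and> closed_path vs))
     \<longleftrightarrow> (\<forall>us. Gpath S us \<and> hd us \<in> dict \<omega>0 \<and> length (hd us) = 2
              \<longrightarrow> path_len us < card (UNIV :: 'a set) ^ 2))"
proof -
  have convergence: "((\<lambda>n. hdist (IHS S \<omega>0 n) (OmegaS S)) \<longlonglongrightarrow> 0) \<longleftrightarrow> \<not> Gpaths_unbounded S (dict \<omega>0)"
    by (rule IHS_converges_iff_Gpaths_bounded[OF nonempty_images prim hull_exists])
  have no_closed_subpath: "(\<forall>us. Gpath S us \<and> hd us \<in> dict \<omega>0 \<and> length (hd us) = 2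
              \<longrightarrow> \<not> (\<exists>vs. subpath S vs us \<and> closed_path vs)) \<longleftrightarrow> \<not> Gpaths_unbounded S (dict \<omega>0)"
    unfolding Gpaths_unbounded_iff_closed_subpath using Gpath_hd_length by blast
  have short: "(\<forall>us. Gpath S us \<and> hd us \<in> dict \<omega>0 \<and> length (hd us) = 2
              \<longrightarrow> path_len us < card (UNIV :: 'a set) ^ 2) \<longleftrightarrow> \<not> Gpaths_unbounded S (dict \<omega>0)"
    unfolding Gpaths_unbounded_iff_long using Gpath_hd_length by (auto simp: not_le)
  show ?thesis using convergence no_closed_subpath short by blast
qed

end
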